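(* Let $S$ be a numerical semigroup with minimal generators $e<a_1<\dots<a_t$, and let $n\in S$ with $n\equiv i\pmod e$, $0\le i<e$. Then ${\rm adj}(n)\in{\rm adj}(S_i)$ and ${\rm d}_{\max}(n;S)\le|\mathcal R({\rm adj}(n))|$. In particular, $\mathcal R({\rm adj}(n))$ is nonempty.
   Context: A numerical semigroup is a submonoid of $(\mathbb N,+)$ with finite complement in $\mathbb N$. An $S$-factorization of $n\in S$ is a tuple $(c_0,\dots,c_t)\in\mathbb N^{t+1}$ with $c_0e+\sum c_ia_i=n$, of length $\sum c_i$. ${\rm ord}(n;S)$ is the maximal such length, and ${\rm d}_{\max}(n;S)$ is the number of $S$-factorizations of $n$ of length ${\rm ord}(n;S)$. Let $d_i=a_i-e$, $B=\langle e,d_1,\dots,d_t\rangle$ and $\mathcal D=(e,d_1,\dots,d_t)$. A $B^{\mathcal D}$-factorization of $b\in B$ is $(x_0,\dots,x_t)\in\mathbb N^{t+1}$ with $x_0e+\sum x_id_i=b$, of length $\sum x_i$. $\min{\rm ord}(b;B^{\mathcal D})$ is the minimal such length, and $\mathcal P(b)$ is the set of all of them. Put ${\rm adj}(s)=s-{\rm ord}(s;S)e$ for $s\in S$, and $S_i=\{s\in S:s\equiv i\pmod e\}$. Write ${\rm adj}(S_i)=\{{\rm adj}(s):s\in S_i\}=\{u_0<u_1<\cdots\}$. Define $\mathcal R(u_0)=\mathcal P(u_0)$ and, for $j>0$, $\mathcal R(u_j)=\{\mathbf x\in\mathcal P(u_j):|\mathbf x|<\min{\rm ord}(u_{j-1};B^{\mathcal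 D})-\frac{u_j-u_{j-1}}{e}\}$. *)

theory Defs
  imports Complex_Main
begin

definition numerical_semigroup :: "nat set \<Rightarrow> bool" where
  "numerical_semigroup S \<longleftrightarrow> 0 \<in> S \<and> (\<forall>x\<in>S. \<forall>y\<in>S. x + y \<in> S) \<and> finite (UNIV - S)"

inductive_set monoid_gen :: "nat set \<Rightarrow> nat set" for G where
  zero: "0 \<in> monoid_gen G"
| step: "x \<in> G \<Longrightarrow> y \<in> monoid_gen G \<Longrightarrow> x + y \<in> monoid_gen G"

definition minimal_generating_system :: "nat set \<Rightarrow> nat set \<Rightarrow> bool" where
  "minimal_generating_system G S \<longleftrightarrow> monoid_gen G = S \<and> (\<forall>H. H \<subset> G \<longrightarrow> monoid_gen H \<noteq> S)"

text \<open>Tuples (c_0,...,c_t) in N^(t+1) are represented as functions nat => nat vanishing above t.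
  Generators: e (index 0) and a 1, ..., a t.\<close>

definition tuple_len :: "nat \<Rightarrow> (nat \<Rightarrow> nat) \<Rightarrow> nat" where
  "tuple_len t c = (\<Sum>j\<le>t. c j)"

definition S_facts :: "nat \<Rightarrow> (nat \<Rightarrow> nat) \<Rightarrow> nat \<Rightarrow> nat \<Rightarrow> (nat \<Rightarrow> nat) set" where
  "S_facts e a t n = {c. (\<forall>j>t. c j = 0) \<and> c 0 * e + (\<Sum>j=1..t. c j * a j) = n}"

definition ord_S :: "nat \<Rightarrow> (nat \<Rightarrow> nat) \<Rightarrow> nat \<Rightarrow> nat \<Rightarrow> nat" where
  "ord_S e a t n = Max (tuple_len t ` S_facts e a t n)"

definition dmax :: "nat \<Rightarrow> (nat \<Rightarrow> nat) \<Rightarrow> nat \<Rightarrow> nat \<Rightarrow> nat" where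
  "dmax e a t n = card {c \<in> S_facts e a t n. tuple_len t c = ord_S e a t n}"

definition P_facts :: "nat \<Rightarrow> (nat \<Rightarrow> nat) \<Rightarrow> nat \<Rightarrow> nat \<Rightarrow> (nat \<Rightarrow> nat) set" where
  "P_facts e a t b = {x. (\<forall>j>t. x j = 0) \<and> x 0 * e + (\<Sum>j=1..t. x j * (a j - e)) = b}"

definition minord_B :: "nat \<Rightarrow> (nat \<Rightarrow> nat) \<Rightarrow> nat \<Rightarrow> nat \<Rightarrow> nat" where
  "minord_B e a t b = Min (tuple_len t ` P_facts e a t b)"

definition adj :: "nat \<Rightarrow> (nat \<Rightarrow> nat) \<Rightarrow> nat \<Rightarrow> nat \<Rightarrow> nat" where
  "adj e a t s = s - ord_S e a t s * e"

definition S_res :: "nat set \<Rightarrow> nat \<Rightarrow> nat \<Rightarrow> nat set" where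
  "S_res S e i = {s \<in> S. s mod e = i}"

definition adj_set :: "nat set \<Rightarrow> nat \<Rightarrow> (nat \<Rightarrow> nat) \<Rightarrow> nat \<Rightarrow> nat \<Rightarrow> nat set" where
  "adj_set S e a t i = adj e a t ` S_res S e i"

text \<open>R(u) for u in adj(S_i) = {u_0 < u_1 < ...}: if u = u_0 then P(u); if u = u_j with j > 0,
  the predecessor u_{j-1} is the largest element of adj(S_i) below u.\<close>
definition R_set :: "nat set \<Rightarrow> nat \<Rightarrow> (nat \<Rightarrow> nat) \<Rightarrow> nat \<Rightarrow> nat \<Rightarrow> nat \<Rightarrow> (nat \<Rightarrow> nat) set" where
  "R_set S e a t i u =
     (if u = Min (adj_set S e a t i) then P_facts e a t u
      else (let u' = Max {v \<in> adj_set S e a t i. v < u} in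
            {x \<in> P_facts e a t u.
               real (tuple_len t x) < real (minord_B e a t u') - (real u - real u') / real e}))"

end

theory Submission
  imports Defs
begin

text \<open>An S-factorization of s of length l uses the generators a_j = e + d_j, so
  deleting its e-coordinate leaves a B-factorization of s - l e; conversely a B-factorization
  of b whose d-part has length at most m lifts to an S-factorization of b + m e of length at
  least m. Applied to maximal-length factorizations of n, the first direction maps them
  injectively into P(adj n). For the bound defining R, let u' < adj n be the predecessor of
  adj n in adj(S_i), so that adj n = u' + k e with k > 0: a B-factorization of u' of length
  at most ord n + k would lift to an S-factorization of n = u' + (ord n + k) e longer than
  ord n, hence minord u' > ord n + k, and the images have length at most ord n.\<close>

lemma tuple_len_split_first: "tuple_len t c = c 0 + (\<Sum>j=1..t. c j)"
proof -
  have "{..t} = insert 0 {1..t}" by (auto simp: not_less_eq_eq)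
  then show ?thesis by (simp add: tuple_len_def)
qed

lemma inj_on_drop_first_same_len: "inj_on (\<lambda>c. c(0 := 0)) {c. tuple_len t c = l}"
proof (rule inj_onI)
  fix c d
  assume c: "c \<in> {c. tuple_len t c = l}" and d: "d \<in> {c. tuple_len t c = l}"
    and eq: "c(0 := 0) = d(0 := 0)"
  have tail: "c j = d j" if "j \<noteq> 0" for j using eq that by (metis fun_upd_other)
  have "(\<Sum>j=1..t. c j) = (\<Sum>j=1..t. d j)" by (rule sum.cong) (auto intro: tail)
  then have "c 0 = d 0" using c d by (simp add: tuple_len_split_first)
  then show "c = d" using tail by (metis ext)
qed

lemma Max_less_in:
  fixes A :: "'a::linorder set"
  assumes "finite A" and "u \<in> A" and "u \<noteq> Min A"
  shows "Max {v \<in> A. v < u} \<in> A" and "Max {v \<in> A. v < u} < u"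
proof -
  have "Min A < u" using Min_le[OF assms(1,2)] assms(3) by auto
  moreover have "Min A \<in> A" using assms(1,2) by (intro Min_in) auto
  ultimately have "Min A \<in> {v \<in> A. v < u}" by simp
  then have "Max {v \<in> A. v < u} \<in> {v \<in> A. v < u}" using assms(1) by (intro Max_in) auto
  then show "Max {v \<in> A. v < u} \<in> A" and "Max {v \<in> A. v < u} < u" by auto
qed

lemma finite_factorizations:
  fixes e :: nat and g :: "nat \<Rightarrow> nat"
  assumes "0 < e" and "\<forall>j\<in>{1..t}. 0 < g j"
  shows "finite {c. (\<forall>j>t. c j = 0) \<and> c 0 * e + (\<Sum>j=1..t. c j * g j) = n}"
proof (rule finite_subset)
  show "finite {c. \<forall>j. (j \<in> {..t} \<longrightarrow> c j \<in> {..n}) \<and> (j \<notin> {..t} \<longrightarrow> c j = 0)}"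
    by (rule finite_set_of_finite_funs) auto
  show "{c. (\<forall>j>t. c j = 0) \<and> c 0 * e + (\<Sum>j=1..t. c j * g j) = n}
      \<subseteq> {c. \<forall>j. (j \<in> {..t} \<longrightarrow> c j \<in> {..n}) \<and> (j \<notin> {..t} \<longrightarrow> c j = 0)}"
  proof (intro subsetI CollectI allI conjI impI)
    fix c j
    assume "c \<in> {c. (\<forall>j>t. c j = 0) \<and> c 0 * e + (\<Sum>j=1..t. c j * g j) = n}"
    then have vanish: "\<forall>j>t. c j = 0" and total: "c 0 * e + (\<Sum>j=1..t. c j * g j) = n"
      by auto
    show "j \<notin> {..t} \<Longrightarrow> c j = 0" using vanish by simp
    assume "j \<in> {..t}"
    then consider "j = 0" | "j \<in> {1..t}" by fastforce
    then show "c j \<in> {..n}"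
    proof cases
      case 1
      have "c 0 \<le> c 0 * e" using assms(1) by simp
      also have "\<dots> \<le> n" using total by linarith
      finally show ?thesis using 1 by simp
    next
      case 2
      have "0 < g j" using assms(2) 2 by blast
      then have "c j \<le> c j * g j" by simp
      also have "\<dots> \<le> (\<Sum>j=1..t. c j * g j)" by (rule member_le_sum) (use 2 in auto)
      finally show ?thesis using total by simp
    qed
  qed
qed

lemma finite_S_facts:
  assumes "0 < e" and "\<forall>j\<in>{1..t}. e < a j"
  shows "finite (S_facts e a t n)"
  unfolding S_facts_def using assms by (intro finite_factorizations) auto

lemma finite_P_facts:
  assumes "0 < e" and "\<forall>j\<in>{1..t}. e < a j"
  shows "finite (P_facts e a t b)"
  unfolding P_facts_def using assms by (intro finite_factorizations) auto

lemma sum_mult_generators_split: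
  fixes e :: nat
  assumes "\<forall>j\<in>{1..t}. e < a j"
  shows "(\<Sum>j=1..t. y j * a j) = (\<Sum>j=1..t. y j) * e + (\<Sum>j=1..t. y j * (a j - e))"
proof -
  have "(\<Sum>j=1..t. y j * a j) = (\<Sum>j=1..t. y j * e + y j * (a j - e))"
  proof (rule sum.cong)
    fix j assume "j \<in> {1..t}"
    then have "a j = e + (a j - e)" using assms by fastforce
    then show "y j * a j = y j * e + y j * (a j - e)" by (metis add_mult_distrib2)
  qed simp
  then show ?thesis by (simp add: sum.distrib sum_distrib_right)
qed

lemma S_facts_value:
  assumes "\<forall>j\<in>{1..t}. e < a j" and "c \<in> S_facts e a t n"
  shows "n = tuple_len t c * e + (\<Sum>j=1..t. c j * (a j - e))"
  using assms sum_mult_generators_split[OF assms(1), of c]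
  by (simp add: S_facts_def tuple_len_split_first algebra_simps)

lemma P_fact_of_S_fact:
  assumes "\<forall>j\<in>{1..t}. e < a j" and "c \<in> S_facts e a t n"
  shows "c(0 := 0) \<in> P_facts e a t (n - tuple_len t c * e)"
proof -
  have "(\<Sum>j=1..t. (c(0 := 0)) j * (a j - e)) = (\<Sum>j=1..t. c j * (a j - e))"
    by (intro sum.cong) auto
  then show ?thesis
    using assms S_facts_value[OF assms] by (auto simp: P_facts_def S_facts_def)
qed

text \<open>The lift keeps the d-part of y and fills up the e-coordinate, which is possible as soon
  as the d-part is no longer than m.\<close>
lemma S_fact_of_P_fact:
  assumes "\<forall>j\<in>{1..t}. e < a j" and "y \<in> P_facts e a t b" and "tuple_len t y \<le> m"
  obtains c where "c \<in> S_facts e a t (b + m * e)" and "m \<le> tuple_len t c"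
proof
  define Y where "Y = (\<Sum>j=1..t. y j)"
  define c where "c = y(0 := m + y 0 - Y)"
  have Y_le: "Y \<le> m" using assms(3) by (simp add: tuple_len_split_first Y_def)
  have tail: "(\<Sum>j=1..t. c j * a j) = (\<Sum>j=1..t. y j * a j)" "(\<Sum>j=1..t. c j) = Y"
    by (auto simp: c_def Y_def intro: sum.cong)
  have "c 0 * e + Y * e = (m + y 0) * e"
    using Y_le by (simp add: c_def flip: add_mult_distrib)
  then show "c \<in> S_facts e a t (b + m * e)"
    using assms(2) tail sum_mult_generators_split[OF assms(1), of y]
    by (auto simp: S_facts_def P_facts_def c_def Y_def algebra_simps)
  show "m \<le> tuple_len t c"
    using Y_le tail by (simp add: tuple_len_split_first c_def)
qed

lemma generator_pos:
  assumes "\<forall>j\<in>{1..t}. e < a j" and "minimal_generating_system (insert e (a ` {1..t})) S"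
  shows "0 < e"
proof (rule ccontr)
  assume "\<not> 0 < e"
  then have e0: "e = 0" by simp
  let ?H = "a ` {1..t}"
  have "e \<notin> ?H" using assms(1) by fastforce
  then have proper: "?H \<subset> insert e ?H" by blast
  have "x \<in> monoid_gen ?H" if "x \<in> monoid_gen (insert e ?H)" for x
    using that by induction (auto simp: e0 intro: monoid_gen.intros)
  moreover have "x \<in> monoid_gen (insert e ?H)" if "x \<in> monoid_gen ?H" for x
    using that by induction (auto intro: monoid_gen.intros)
  ultimately have "monoid_gen ?H = S"
    using assms(2) unfolding minimal_generating_system_def by blast
  then show False using assms(2) proper unfolding minimal_generating_system_def by blast
qed

lemma S_facts_nonempty:
  assumes "x \<in> monoid_gen (insert e (a ` {1..t}))"
  shows "S_facts e a t x \<noteq> {}"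
  using assms
proof induction
  case zero
  have "(\<lambda>_. 0) \<in> S_facts e a t 0" by (simp add: S_facts_def)
  then show ?case by blast
next
  case (step x y)
  then obtain c where c: "c \<in> S_facts e a t y" by blast
  from step.hyps(1) consider "x = e" | j where "j \<in> {1..t}" "x = a j" by auto
  then show ?case
  proof cases
    case 1
    then have "c(0 := Suc (c 0)) \<in> S_facts e a t (x + y)" using c by (auto simp: S_facts_def)
    then show ?thesis by blast
  next
    case 2
    have "(\<Sum>i=1..t. (c(j := Suc (c j))) i * a i)
        = (\<Sum>i=1..t. c i * a i + (if i = j then a j else 0))"
      by (intro sum.cong) auto
    also have "\<dots> = (\<Sum>i=1..t. c i * a i) + a j" using 2 by (simp add: sum.distrib)
    finally have "c(j := Suc (c j)) \<in> S_facts e a t (x + y)"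
      using c 2 by (auto simp: S_facts_def)
    then show ?thesis by blast
  qed
qed

context
  fixes e t :: nat and a :: "nat \<Rightarrow> nat"
  assumes e_pos: "0 < e" and gen_gt: "\<forall>j\<in>{1..t}. e < a j"
begin

lemma ord_S_ge:
  assumes "c \<in> S_facts e a t n"
  shows "tuple_len t c \<le> ord_S e a t n"
  unfolding ord_S_def using finite_S_facts[OF e_pos gen_gt] assms by (intro Max_ge) auto

lemma ord_S_attained:
  assumes "S_facts e a t n \<noteq> {}"
  obtains c where "c \<in> S_facts e a t n" and "tuple_len t c = ord_S e a t n"
proof -
  have "ord_S e a t n \<in> tuple_len t ` S_facts e a t n"
    unfolding ord_S_def using finite_S_facts[OF e_pos gen_gt] assms by (intro Max_in) auto
  then obtain c where "c \<in> S_facts e a t n" and "ord_S e a t n = tuple_len t c" by blast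
  then show ?thesis using that by simp
qed

lemma adj_add_ord_S:
  assumes "S_facts e a t n \<noteq> {}"
  shows "adj e a t n + ord_S e a t n * e = n"
proof -
  obtain c where "c \<in> S_facts e a t n" and "tuple_len t c = ord_S e a t n"
    using ord_S_attained[OF assms] .
  then show ?thesis using S_facts_value[OF gen_gt] by (fastforce simp: adj_def)
qed

lemma P_fact_of_maximal_S_fact:
  assumes "c \<in> S_facts e a t n" and "tuple_len t c = ord_S e a t n"
  shows "c(0 := 0) \<in> P_facts e a t (adj e a t n)"
  using P_fact_of_S_fact[OF gen_gt assms(1)] assms(2) by (simp add: adj_def)

lemma adj_mod:
  assumes "S_facts e a t n \<noteq> {}"
  shows "adj e a t n mod e = n mod e"
  by (metis adj_add_ord_S[OF assms] mod_mult_self1)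

lemma adj_add_multiple_le:
  assumes "S_facts e a t n \<noteq> {}"
  shows "adj e a t (n + k * e) \<le> adj e a t n"
proof -
  obtain c where c: "c \<in> S_facts e a t n" "tuple_len t c = ord_S e a t n"
    using ord_S_attained[OF assms] .
  have "c(0 := c 0 + k) \<in> S_facts e a t (n + k * e)"
    using c(1) by (auto simp: S_facts_def algebra_simps)
  moreover have "tuple_len t (c(0 := c 0 + k)) = ord_S e a t n + k"
    using c(2) by (simp add: tuple_len_split_first)
  ultimately have "(ord_S e a t n + k) * e \<le> ord_S e a t (n + k * e) * e"
    using ord_S_ge by (metis mult_le_mono1)
  then show ?thesis by (simp add: adj_def add_mult_distrib)
qed

lemma finite_adj_set:
  assumes "\<forall>s\<in>S. S_facts e a t s \<noteq> {}"
  shows "finite (adj_set S e a t i)"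
proof (cases "S_res S e i = {}")
  case True
  then show ?thesis by (simp add: adj_set_def)
next
  case False
  define s0 where "s0 = (LEAST s. s \<in> S_res S e i)"
  have s0: "s0 \<in> S_res S e i" using False unfolding s0_def by (metis LeastI ex_in_conv)
  have "adj e a t s \<le> adj e a t s0" if s: "s \<in> S_res S e i" for s
  proof -
    have "s mod e = s0 mod e" using s s0 by (simp add: S_res_def)
    moreover have "s0 \<le> s" unfolding s0_def using s by (rule Least_le)
    ultimately obtain k where "s = s0 + e * k" by (rule mod_eq_nat1E)
    then show ?thesis
      using adj_add_multiple_le[of s0 k] assms s0 by (simp add: S_res_def mult.commute)
  qed
  then have "adj_set S e a t i \<subseteq> {..adj e a t s0}" by (auto simp: adj_set_def)
  then show ?thesis using finite_subset by blast
qed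

lemma adj_set_memD:
  assumes "\<forall>s\<in>S. S_facts e a t s \<noteq> {}" and "u \<in> adj_set S e a t i"
  shows "u mod e = i" and "P_facts e a t u \<noteq> {}"
proof -
  obtain s where s: "s \<in> S" "s mod e = i" "u = adj e a t s"
    using assms(2) by (auto simp: adj_set_def S_res_def)
  then have ne: "S_facts e a t s \<noteq> {}" using assms(1) by blast
  show "u mod e = i" using adj_mod[OF ne] s by simp
  obtain c where "c \<in> S_facts e a t s" and "tuple_len t c = ord_S e a t s"
    using ord_S_attained[OF ne] .
  then show "P_facts e a t u \<noteq> {}" using P_fact_of_maximal_S_fact s(3) by blast
qed

lemma ord_S_add_gap_lt_minord_B:
  assumes "S_facts e a t n \<noteq> {}" and "P_facts e a t u \<noteq> {}"
    and "u + k * e = adj e a t n" and "0 < k"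
  shows "ord_S e a t n + k < minord_B e a t u"
proof -
  have "ord_S e a t n + k < tuple_len t y" if y: "y \<in> P_facts e a t u" for y
  proof (rule ccontr)
    assume "\<not> ?thesis"
    then have "tuple_len t y \<le> ord_S e a t n + k" by simp
    then obtain c where c: "c \<in> S_facts e a t (u + (ord_S e a t n + k) * e)"
      and long: "ord_S e a t n + k \<le> tuple_len t c"
      by (rule S_fact_of_P_fact[OF gen_gt y])
    have "u + (ord_S e a t n + k) * e = n"
      using assms(3) adj_add_ord_S[OF assms(1)] by (simp add: algebra_simps)
    then have "tuple_len t c \<le> ord_S e a t n" using ord_S_ge c by simp
    then show False using long assms(4) by simp
  qed
  then show ?thesis
    using finite_P_facts[OF e_pos gen_gt] assms(2) by (simp add: minord_B_def)
qed

lemma maximal_S_fact_drop_first_in_R_set: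
  assumes S_facts_ne: "\<forall>s\<in>S. S_facts e a t s \<noteq> {}" and "n \<in> S" and "n mod e = i"
    and c: "c \<in> S_facts e a t n" "tuple_len t c = ord_S e a t n"
  shows "c(0 := 0) \<in> R_set S e a t i (adj e a t n)"
proof -
  define u where "u = adj e a t n"
  define A where "A = adj_set S e a t i"
  have P_fact: "c(0 := 0) \<in> P_facts e a t u"
    using P_fact_of_maximal_S_fact[OF c] by (simp add: u_def)
  show ?thesis
  proof (cases "u = Min A")
    case True
    then show ?thesis using P_fact by (simp add: R_set_def u_def A_def)
  next
    case False
    define u' where "u' = Max {v \<in> A. v < u}"
    have "u \<in> A" using assms(2,3) by (auto simp: A_def u_def adj_set_def S_res_def)
    moreover have "finite A" using finite_adj_set[OF S_facts_ne] by (simp add: A_def)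
    ultimately have "u' \<in> A" and "u' < u" using Max_less_in False by (simp_all add: u'_def)
    moreover have "u' mod e = u mod e"
      using adj_set_memD(1)[OF S_facts_ne] \<open>u' \<in> A\<close> \<open>u \<in> A\<close> by (simp add: A_def)
    ultimately obtain k where k: "u = u' + e * k" by (elim mod_eq_nat2E) simp
    then have "0 < k" using \<open>u' < u\<close> by (cases "k = 0") simp_all
    then have "ord_S e a t n + k < minord_B e a t u'"
      using ord_S_add_gap_lt_minord_B S_facts_ne assms(2) adj_set_memD(2)[OF S_facts_ne]
        \<open>u' \<in> A\<close> k
      by (simp add: A_def u_def mult.commute)
    moreover have "tuple_len t (c(0 := 0)) \<le> ord_S e a t n"
      using c(2) by (simp add: tuple_len_split_first)
    moreover have "(real u - real u') / real e = real k" using k e_pos by simp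
    ultimately show ?thesis using P_fact False
      by (simp add: R_set_def Let_def flip: A_def u_def u'_def)
  qed
qed

end

theorem theorem3p7:
  fixes S :: "nat set" and e t n i :: nat and a :: "nat \<Rightarrow> nat"
  assumes "numerical_semigroup S"
    and "\<forall>j\<in>{1..t}. e < a j"
    and "strict_mono_on {1..t} a"
    and "minimal_generating_system (insert e (a ` {1..t})) S"
    and "n \<in> S"
    and "i < e" and "n mod e = i"
  shows "adj e a t n \<in> adj_set S e a t i
     \<and> dmax e a t n \<le> card (R_set S e a t i (adj e a t n))
     \<and> R_set S e a t i (adj e a t n) \<noteq> {}"
proof -
  have e_pos: "0 < e" by (rule generator_pos[OF assms(2,4)])
  have S_facts_ne: "\<forall>s\<in>S. S_facts e a t s \<noteq> {}"
    using assms(4) S_facts_nonempty by (auto simp: minimal_generating_system_def)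
  define D where "D = {c \<in> S_facts e a t n. tuple_len t c = ord_S e a t n}"
  define R where "R = R_set S e a t i (adj e a t n)"
  have image: "(\<lambda>c. c(0 := 0)) ` D \<subseteq> R"
    using maximal_S_fact_drop_first_in_R_set[OF e_pos assms(2) S_facts_ne assms(5,7)]
    by (auto simp: D_def R_def)
  have "R \<subseteq> P_facts e a t (adj e a t n)" by (auto simp: R_def R_set_def Let_def)
  then have "finite R" using finite_P_facts[OF e_pos assms(2)] finite_subset by blast
  have "inj_on (\<lambda>c. c(0 := 0)) D"
    by (rule inj_on_subset[OF inj_on_drop_first_same_len]) (auto simp: D_def)
  then have "dmax e a t n = card ((\<lambda>c. c(0 := 0)) ` D)"
    by (simp add: dmax_def D_def card_image)
  also have "\<dots> \<le> card R" by (rule card_mono[OF \<open>finite R\<close> image])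
  finally have "dmax e a t n \<le> card R" .
  moreover obtain c where "c \<in> D"
    using ord_S_attained[OF e_pos assms(2)] S_facts_ne assms(5) unfolding D_def by blast
  then have "R \<noteq> {}" using image by blast
  moreover have "adj e a t n \<in> adj_set S e a t i"
    using assms(5,7) by (auto simp: adj_set_def S_res_def)
  ultimately show ?thesis by (simp add: R_def)
qed

end
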